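(* Let $r\ge 1$ and $s\ge 1$ be integers and $n\ge 1$. Let $\lambda=\lambda(T_r(n))$, $\mu=\lambda(\overline{K}_s\vee T_r(n))$ and $d_0=2\bigl(e(T_r(n))-1\bigr)/n$. Then \[ \frac{n(\mu+d_0)}{\mu^2-\lambda^2}<\frac{\mu}{s}. \]
   Context: $\lambda(\cdot)$ is the spectral radius of the adjacency matrix and $e(\cdot)$ the number of edges. $T_r(n)$ is the complete $r$-partite graph on $n$ vertices with part sizes differing by at most one (for $r=1$, the edgeless graph). $\overline{K}_s$ is the edgeless graph on $s$ vertices and $\vee$ denotes the join. *)

theory Defs
  imports "Jordan_Normal_Form.Spectral_Radius"
begin

text \<open>Simple graphs on vertex set {0..<N} given by a symmetric irreflexive adjacency
  predicate; the adjacency matrix is a complex N x N 0/1 matrix.\<close>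

definition adj_mat :: "nat \<Rightarrow> (nat \<Rightarrow> nat \<Rightarrow> bool) \<Rightarrow> complex mat" where
  "adj_mat N E = mat N N (\<lambda>(i,j). if E i j then 1 else 0)"

definition num_edges :: "nat \<Rightarrow> (nat \<Rightarrow> nat \<Rightarrow> bool) \<Rightarrow> nat" where
  "num_edges N E = card {(i,j). i < j \<and> j < N \<and> E i j}"

text \<open>Turan graph T_r(n) on {0..<n}: vertex i lies in part (i mod r); parts have sizes
  differing by at most one; two vertices are adjacent iff in different parts.\<close>
definition turan_adj :: "nat \<Rightarrow> nat \<Rightarrow> nat \<Rightarrow> bool" where
  "turan_adj r i j = (i mod r \<noteq> j mod r)"

text \<open>The join of the edgeless graph on s vertices {n..<n+s} with T_r(n) on {0..<n}.\<close>
definition join_turan_adj :: "nat \<Rightarrow> nat \<Rightarrow> nat \<Rightarrow> nat \<Rightarrow> bool" where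
  "join_turan_adj r n i j =
     ((i < n \<and> j < n \<and> turan_adj r i j) \<or> (i < n \<and> n \<le> j) \<or> (n \<le> i \<and> j < n))"

end

theory Submission
  imports Defs
begin

(*
  The join of the edgeless graph on s vertices with T_r(n) is again a complete multipartite
  graph, so both spectral radii come from one fact: if a complete multipartite graph has
  parts of sizes p_1, ..., p_k, then its spectral radius is the number rho >= 0 with
  sum_j p_j / (rho + p_j) = 1, because x_v = 1 / (rho + size of the part of v) is a positive
  eigenvector for rho (Collatz-Wielandt). The parts of T_r(n) have sizes q = n div r and
  q + 1; with B the number of vertices in parts of size q, this makes L = lambda + q the
  root of L^2 - (n - 1) L - B in [n - 1, n], and mu a root of the cubic
  mu (mu + q) (mu + q + 1) = (mu + s) (n (mu + q) + B). The cubic gives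
  s (n (mu + q) + B) = mu (mu - lambda) (mu + lambda + 2q - n + 1), hence mu > lambda, and after
  eliminating s the claimed inequality is (mu - lambda) times a quantity that is positive
  because L - n + 1 lies in [0, 1].
*)

lemma norm_eigenvalue_le_of_positive_subeigenvector:
  fixes M :: "complex mat" and m :: "nat \<Rightarrow> nat \<Rightarrow> real" and x :: "nat \<Rightarrow> real"
  assumes M: "M \<in> carrier_mat N N"
    and M_entries: "\<And>i j. i < N \<Longrightarrow> j < N \<Longrightarrow> M $$ (i,j) = of_real (m i j)"
    and m_nonneg: "\<And>i j. i < N \<Longrightarrow> j < N \<Longrightarrow> 0 \<le> m i j"
    and x_pos: "\<And>i. i < N \<Longrightarrow> 0 < x i"
    and subeigen: "\<And>i. i < N \<Longrightarrow> (\<Sum>j<N. m i j * x j) \<le> c * x i"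
    and "eigenvalue M k"
  shows "cmod k \<le> c"
proof -
  from \<open>eigenvalue M k\<close> obtain v where v: "v \<in> carrier_vec N" "v \<noteq> 0\<^sub>v N" "M *\<^sub>v v = k \<cdot>\<^sub>v v"
    unfolding eigenvalue_def eigenvector_def using M by auto
  obtain j0 where j0: "j0 < N" "v $ j0 \<noteq> 0"
    using v(1,2) by (metis carrier_vecD eq_vecI index_zero_vec)
  define R where "R i = cmod (v $ i) / x i" for i
  obtain i0 where i0: "i0 < N" and R_max: "\<And>j. j < N \<Longrightarrow> R j \<le> R i0"
    using Max_in[of "R ` {..<N}"] Max_ge[of "R ` {..<N}"] j0(1) by fastforce
  have v_i0: "cmod (v $ i0) = R i0 * x i0"
    using x_pos[OF i0] by (simp add: R_def)
  have v_le: "cmod (v $ j) \<le> R i0 * x j" if "j < N" for j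
    using R_max[OF that] x_pos[OF that] by (simp add: R_def divide_le_eq)
  have "0 < R j0"
    using j0 x_pos[OF j0(1)] by (simp add: R_def)
  then have v_i0_pos: "0 < cmod (v $ i0)"
    using R_max[OF j0(1)] x_pos[OF i0] v_i0 by simp
  have "k * v $ i0 = (\<Sum>j<N. M $$ (i0,j) * v $ j)"
  proof -
    have "k * v $ i0 = (M *\<^sub>v v) $ i0" using v(1,3) i0 by simp
    also have "\<dots> = (\<Sum>j<N. M $$ (i0,j) * v $ j)"
      using M v(1) i0 by (auto simp: scalar_prod_def atLeast0LessThan)
    finally show ?thesis .
  qed
  then have "cmod k * cmod (v $ i0) = cmod (\<Sum>j<N. M $$ (i0,j) * v $ j)"
    by (metis norm_mult)
  also have "\<dots> \<le> (\<Sum>j<N. m i0 j * cmod (v $ j))"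
    using norm_sum[of "\<lambda>j. M $$ (i0,j) * v $ j" "{..<N}"]
    by (simp add: M_entries[OF i0] norm_mult m_nonneg[OF i0])
  also have "\<dots> \<le> (\<Sum>j<N. m i0 j * (R i0 * x j))"
    by (intro sum_mono mult_left_mono) (auto simp: v_le m_nonneg[OF i0])
  also have "\<dots> = R i0 * (\<Sum>j<N. m i0 j * x j)"
    by (simp add: sum_distrib_left algebra_simps)
  also have "\<dots> \<le> R i0 * (c * x i0)"
    using subeigen[OF i0] \<open>0 < R j0\<close> R_max[OF j0(1)] by (simp add: mult_left_mono)
  also have "\<dots> = c * cmod (v $ i0)"
    using v_i0 by simp
  finally show ?thesis
    using v_i0_pos by simp
qed

lemma spectral_radius_eq_of_positive_eigenvector:
  fixes M :: "complex mat" and m :: "nat \<Rightarrow> nat \<Rightarrow> real" and x :: "nat \<Rightarrow> real"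
  assumes M: "M \<in> carrier_mat N N" and "0 < N"
    and M_entries: "\<And>i j. i < N \<Longrightarrow> j < N \<Longrightarrow> M $$ (i,j) = of_real (m i j)"
    and m_nonneg: "\<And>i j. i < N \<Longrightarrow> j < N \<Longrightarrow> 0 \<le> m i j"
    and x_pos: "\<And>i. i < N \<Longrightarrow> 0 < x i"
    and eigen: "\<And>i. i < N \<Longrightarrow> (\<Sum>j<N. m i j * x j) = c * x i"
  shows "spectral_radius M = c"
proof -
  have "0 \<le> c * x 0"
    unfolding eigen[OF \<open>0 < N\<close>, symmetric]
    using \<open>0 < N\<close> m_nonneg x_pos by (intro sum_nonneg mult_nonneg_nonneg) (auto intro: less_imp_le)
  then have "0 \<le> c"
    using x_pos[OF \<open>0 < N\<close>] by (simp add: zero_le_mult_iff)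
  define w where "w = vec N (\<lambda>i. complex_of_real (x i))"
  have "w \<noteq> 0\<^sub>v N"
    using x_pos[OF \<open>0 < N\<close>] \<open>0 < N\<close> unfolding w_def
    by (metis index_vec index_zero_vec(1) less_irrefl of_real_eq_0_iff)
  moreover have "M *\<^sub>v w = of_real c \<cdot>\<^sub>v w"
  proof (rule eq_vecI)
    fix i assume "i < dim_vec (of_real c \<cdot>\<^sub>v w)"
    then have i: "i < N" by (simp add: w_def)
    have "(M *\<^sub>v w) $ i = (\<Sum>j<N. of_real (m i j * x j))"
      using M i by (auto simp: scalar_prod_def atLeast0LessThan w_def M_entries intro: sum.cong)
    also have "\<dots> = of_real (c * x i)"
      by (simp only: of_real_sum[symmetric] eigen[OF i])
    finally show "(M *\<^sub>v w) $ i = (of_real c \<cdot>\<^sub>v w) $ i"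
      using i by (simp add: w_def)
  qed (use M in \<open>simp add: w_def\<close>)
  ultimately have "of_real c \<in> spectrum M"
    using M unfolding spectrum_def eigenvalue_def eigenvector_def
    by (intro CollectI exI[of _ w]) (auto simp: w_def)
  then have "c \<le> spectral_radius M"
    using spectral_radius_mem_max(2)[OF M \<open>0 < N\<close>] \<open>0 \<le> c\<close> by force
  moreover obtain k where "k \<in> spectrum M" "spectral_radius M = cmod k"
    using spectral_radius_mem_max(1)[OF M \<open>0 < N\<close>] by auto
  moreover have "cmod k \<le> c"
    using norm_eigenvalue_le_of_positive_subeigenvector[OF M M_entries m_nonneg x_pos, where c = c]
      eigen \<open>k \<in> spectrum M\<close> by (simp add: spectrum_def)
  ultimately show ?thesis by simp
qed

definition part_size :: "nat \<Rightarrow> (nat \<Rightarrow> 'a) \<Rightarrow> nat \<Rightarrow> nat" where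
  "part_size N \<pi> i = card {j. j < N \<and> \<pi> j = \<pi> i}"

lemma part_size_pos: "i < N \<Longrightarrow> 0 < part_size N \<pi> i"
  unfolding part_size_def by (subst card_gt_0_iff) auto

lemma sum_if_same_part:
  fixes y :: real
  shows "(\<Sum>j<N. if \<pi> j = \<pi> i then y else 0) = real (part_size N \<pi> i) * y"
proof -
  have "{j. j < N \<and> \<pi> j = \<pi> i} = {..<N} \<inter> {j. \<pi> j = \<pi> i}" by auto
  then show ?thesis
    unfolding part_size_def using sum.inter_restrict[of "{..<N}" "\<lambda>_. y" "{j. \<pi> j = \<pi> i}"]
    by simp
qed

lemma spectral_radius_complete_multipartite:
  fixes \<pi> :: "nat \<Rightarrow> 'a" and \<rho> :: real
  assumes "0 < N" and "0 \<le> \<rho>" and sum_eq: "(\<Sum>i<N. 1 / (\<rho> + part_size N \<pi> i)) = 1"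
  shows "spectral_radius (adj_mat N (\<lambda>i j. \<pi> i \<noteq> \<pi> j)) = \<rho>"
proof (rule spectral_radius_eq_of_positive_eigenvector)
  let ?x = "\<lambda>i. 1 / (\<rho> + part_size N \<pi> i)"
  fix i assume i: "i < N"
  show "0 < ?x i"
    using part_size_pos[OF i, of \<pi>] \<open>0 \<le> \<rho>\<close> by simp
  have "(\<Sum>j<N. (if \<pi> i \<noteq> \<pi> j then 1 else 0) * ?x j) = (\<Sum>j<N. ?x j - (if \<pi> j = \<pi> i then ?x i else 0))"
    by (intro sum.cong) (auto simp: part_size_def)
  also have "\<dots> = 1 - part_size N \<pi> i * ?x i"
    by (simp only: sum_subtractf sum_eq sum_if_same_part)
  also have "\<dots> = \<rho> * ?x i"
    using part_size_pos[OF i, of \<pi>] \<open>0 \<le> \<rho>\<close> by (simp add: field_simps)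
  finally show "(\<Sum>j<N. (if \<pi> i \<noteq> \<pi> j then 1 else 0) * ?x j) = \<rho> * ?x i" .
qed (auto simp: adj_mat_def \<open>0 < N\<close>)

lemma complete_multipartite_equation_solvable:
  fixes \<pi> :: "nat \<Rightarrow> 'a"
  assumes "0 < N"
  obtains \<rho> :: real where "0 \<le> \<rho>" "(\<Sum>i<N. 1 / (\<rho> + part_size N \<pi> i)) = 1"
proof -
  define f where "f \<rho> = (\<Sum>i<N. 1 / (\<rho> + part_size N \<pi> i))" for \<rho> :: real
  have "1 \<le> f 0"
  proof -
    have "1 = (\<Sum>i<N. if \<pi> i = \<pi> 0 then 1 / part_size N \<pi> 0 else 0)"
      using part_size_pos[OF \<open>0 < N\<close>, of \<pi>] by (simp add: sum_if_same_part)
    also have "\<dots> \<le> f 0"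
      unfolding f_def by (intro sum_mono) (auto simp: part_size_def)
    finally show ?thesis .
  qed
  moreover have "f N \<le> 1"
  proof -
    have "f N \<le> (\<Sum>i<N. 1 / real N)"
      unfolding f_def using \<open>0 < N\<close> by (intro sum_mono frac_le) auto
    then show ?thesis
      using \<open>0 < N\<close> by simp
  qed
  moreover have "continuous_on {0..real N} f"
    unfolding f_def using part_size_pos[of _ N \<pi>]
    by (intro continuous_intros) (auto simp: add_nonneg_eq_0_iff)
  ultimately obtain \<rho> where "0 \<le> \<rho>" "f \<rho> = 1"
    using IVT2'[of f "real N" 1 0] by auto
  then show ?thesis
    using that by (simp add: f_def)
qed

lemma spectral_radius_complete_multipartite_equation:
  fixes \<pi> :: "nat \<Rightarrow> 'a"
  assumes "0 < N"
  defines "\<rho> \<equiv> spectral_radius (adj_mat N (\<lambda>i j. \<pi> i \<noteq> \<pi> j))"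
  shows "0 \<le> \<rho>" and "(\<Sum>i<N. 1 / (\<rho> + part_size N \<pi> i)) = 1"
proof -
  obtain \<rho>' :: real where "0 \<le> \<rho>'" "(\<Sum>i<N. 1 / (\<rho>' + part_size N \<pi> i)) = 1"
    using complete_multipartite_equation_solvable[OF \<open>0 < N\<close>] .
  moreover from this have "\<rho> = \<rho>'"
    unfolding \<rho>_def by (intro spectral_radius_complete_multipartite \<open>0 < N\<close>)
  ultimately show "0 \<le> \<rho>" and "(\<Sum>i<N. 1 / (\<rho> + part_size N \<pi> i)) = 1"
    by simp_all
qed

lemma card_residue_class:
  assumes "0 < r" and "c < r"
  shows "card {j. j < n \<and> j mod r = c} = n div r + (if c < n mod r then 1 else 0)"
proof (induction n)
  case 0
  then show ?case by simp
next
  case (Suc n)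
  have "{j. j < Suc n \<and> j mod r = c} = {j. j < n \<and> j mod r = c} \<union> (if n mod r = c then {n} else {})"
    by (auto simp: less_Suc_eq)
  then have "card {j. j < Suc n \<and> j mod r = c} = card {j. j < n \<and> j mod r = c} + (if n mod r = c then 1 else 0)"
    by (auto simp: card_insert_if)
  also have "\<dots> = Suc n div r + (if c < Suc n mod r then 1 else 0)"
    using Suc.IH \<open>c < r\<close> \<open>0 < r\<close> mod_less_divisor[OF \<open>0 < r\<close>, of n]
    by (cases "Suc (n mod r) = r") (auto simp: div_Suc mod_Suc)
  finally show ?case .
qed

lemma part_size_mod:
  assumes "0 < r"
  shows "part_size n (\<lambda>i. i mod r) i = n div r + (if i mod r < n mod r then 1 else 0)"
  using card_residue_class[OF assms] assms by (simp add: part_size_def)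

definition vertices_in_large_parts :: "nat \<Rightarrow> nat \<Rightarrow> nat" where
  "vertices_in_large_parts r n = n mod r * (n div r + 1)"

definition vertices_in_small_parts :: "nat \<Rightarrow> nat \<Rightarrow> nat" where
  "vertices_in_small_parts r n = (r - n mod r) * (n div r)"

lemma vertices_in_parts_sum:
  assumes "0 < r"
  shows "vertices_in_large_parts r n + vertices_in_small_parts r n = n"
proof -
  define q t k where "q = n div r" and "t = n mod r" and "k = r - n mod r"
  have "r = t + k"
    using mod_less_divisor[OF assms, of n] by (simp add: t_def k_def)
  moreover have "n = q * r + t"
    by (simp add: q_def t_def)
  ultimately show ?thesis
    unfolding vertices_in_large_parts_def vertices_in_small_parts_def
      q_def[symmetric] t_def[symmetric] k_def[symmetric]
    by (simp add: algebra_simps)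
qed

lemma sum_part_sizes_mod:
  fixes g :: "nat \<Rightarrow> real"
  assumes "0 < r"
  shows "(\<Sum>i<n. g (part_size n (\<lambda>i. i mod r) i))
    = vertices_in_large_parts r n * g (n div r + 1) + vertices_in_small_parts r n * g (n div r)"
proof -
  define h where "h c = g (n div r + (if c < n mod r then 1 else 0))" for c
  have "(\<Sum>i<n. g (part_size n (\<lambda>i. i mod r) i)) = (\<Sum>i<n. h (i mod r))"
    using part_size_mod[OF assms] by (simp add: h_def)
  also have "\<dots> = (\<Sum>c<r. \<Sum>i\<in>{i. i \<in> {..<n} \<and> i mod r = c}. h (i mod r))"
    using assms by (intro sum.group[symmetric]) auto
  also have "\<dots> = (\<Sum>c<r. card {i. i < n \<and> i mod r = c} * h c)"
    by simp
  also have "\<dots> = (\<Sum>c<r. (n div r + (if c < n mod r then 1 else 0)) * h c)"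
    using card_residue_class[OF assms] by simp
  also have "\<dots> = (\<Sum>c<n mod r. (n div r + 1) * g (n div r + 1)) + (\<Sum>c\<in>{n mod r..<r}. n div r * g (n div r))"
  proof -
    have "{..<r} = {..<n mod r} \<union> {n mod r..<r}"
      using mod_less_divisor[OF assms, of n] by auto
    then have "(\<Sum>c<r. F c) = (\<Sum>c<n mod r. F c) + (\<Sum>c\<in>{n mod r..<r}. F c)" for F :: "nat \<Rightarrow> real"
      by (metis finite_atLeastLessThan finite_lessThan ivl_disj_int_one(2) sum.union_disjoint)
    then show ?thesis
      by (simp add: h_def)
  qed
  also have "\<dots> = vertices_in_large_parts r n * g (n div r + 1) + vertices_in_small_parts r n * g (n div r)"
    unfolding vertices_in_large_parts_def vertices_in_small_parts_def of_nat_mult by (simp add: ac_simps)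
  finally show ?thesis .
qed

definition join_part :: "nat \<Rightarrow> nat \<Rightarrow> nat \<Rightarrow> nat option" where
  "join_part r n i = (if i < n then Some (i mod r) else None)"

lemma join_turan_adj_eq_join_part:
  "join_turan_adj r n = (\<lambda>i j. join_part r n i \<noteq> join_part r n j)"
  by (auto simp: join_turan_adj_def turan_adj_def join_part_def fun_eq_iff)

lemma part_size_join_part:
  shows "i < n \<Longrightarrow> part_size (n + s) (join_part r n) i = part_size n (\<lambda>i. i mod r) i"
    and "n \<le> i \<Longrightarrow> part_size (n + s) (join_part r n) i = s"
proof -
  assume "i < n"
  then have "{j. j < n + s \<and> join_part r n j = join_part r n i} = {j. j < n \<and> j mod r = i mod r}"
    by (auto simp: join_part_def)
  then show "part_size (n + s) (join_part r n) i = part_size n (\<lambda>i. i mod r) i"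
    by (simp add: part_size_def)
next
  assume "n \<le> i"
  then have "{j. j < n + s \<and> join_part r n j = join_part r n i} = {n..<n + s}"
    by (auto simp: join_part_def)
  then show "part_size (n + s) (join_part r n) i = s"
    by (simp add: part_size_def)
qed

lemma sum_part_sizes_join:
  fixes g :: "nat \<Rightarrow> real"
  shows "(\<Sum>i<n + s. g (part_size (n + s) (join_part r n) i))
    = (\<Sum>i<n. g (part_size n (\<lambda>i. i mod r) i)) + s * g s"
proof -
  have "{..<n + s} = {..<n} \<union> {n..<n + s}"
    by auto
  then have "(\<Sum>i<n + s. g (part_size (n + s) (join_part r n) i))
      = (\<Sum>i<n. g (part_size (n + s) (join_part r n) i)) + (\<Sum>i\<in>{n..<n + s}. g (part_size (n + s) (join_part r n) i))"
    by (metis finite_atLeastLessThan finite_lessThan ivl_disj_int_one(2) sum.union_disjoint)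
  then show ?thesis
    by (simp add: part_size_join_part)
qed

lemma two_num_edges_eq_sum_degrees:
  fixes E :: "nat \<Rightarrow> nat \<Rightarrow> bool"
  assumes sym: "\<And>i j. E i j = E j i" and irrefl: "\<And>i. \<not> E i i"
  shows "2 * num_edges N E = (\<Sum>i<N. card {j. j < N \<and> E i j})"
proof -
  define S where "S = {(i,j). i < j \<and> j < N \<and> E i j}"
  have "finite S"
    unfolding S_def by (rule finite_subset[of _ "{..<N} \<times> {..<N}"]) auto
  have "Sigma {..<N} (\<lambda>i. {j. j < N \<and> E i j}) = S \<union> prod.swap ` S"
    unfolding S_def using irrefl sym by (auto simp: image_iff) (metis linorder_neqE_nat)
  moreover have "S \<inter> prod.swap ` S = {}"
    unfolding S_def by auto
  moreover have "card (prod.swap ` S) = card S"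
    by (rule card_image) simp
  ultimately have "card (Sigma {..<N} (\<lambda>i. {j. j < N \<and> E i j})) = 2 * card S"
    using \<open>finite S\<close> by (simp add: card_Un_disjoint)
  then show ?thesis
    unfolding num_edges_def S_def[symmetric] by (simp add: card_SigmaI)
qed

lemma two_num_edges_complete_multipartite:
  "2 * real (num_edges N (\<lambda>i j. \<pi> i \<noteq> \<pi> j)) = real N * real N - (\<Sum>i<N. real (part_size N \<pi> i))"
proof -
  have "2 * num_edges N (\<lambda>i j. \<pi> i \<noteq> \<pi> j) = (\<Sum>i<N. card {j. j < N \<and> \<pi> i \<noteq> \<pi> j})"
    by (rule two_num_edges_eq_sum_degrees) auto
  also have "\<dots> = (\<Sum>i<N. N - part_size N \<pi> i)"
  proof (rule sum.cong[OF refl])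
    fix i
    have "card {j. j < N \<and> \<pi> i \<noteq> \<pi> j} = card ({..<N} - {j. j < N \<and> \<pi> j = \<pi> i})"
      by (rule arg_cong[where f = card]) auto
    also have "\<dots> = N - part_size N \<pi> i"
      unfolding part_size_def by (subst card_Diff_subset) auto
    finally show "card {j. j < N \<and> \<pi> i \<noteq> \<pi> j} = N - part_size N \<pi> i" .
  qed
  finally have "2 * real (num_edges N (\<lambda>i j. \<pi> i \<noteq> \<pi> j)) = (\<Sum>i<N. real (N - part_size N \<pi> i))"
    by (metis of_nat_mult of_nat_numeral of_nat_sum)
  moreover have "part_size N \<pi> i \<le> N" for i
    unfolding part_size_def by (rule order_trans[OF card_mono[of "{..<N}"]]) auto
  ultimately show ?thesis
    by (simp add: sum_subtractf)
qed

lemma two_num_edges_turan: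
  assumes "0 < r"
  shows "2 * real (num_edges n (turan_adj r))
    = real n * (real n - real (n div r)) - real (vertices_in_large_parts r n)"
proof -
  have "(\<Sum>i<n. real (part_size n (\<lambda>i. i mod r) i))
      = real (vertices_in_large_parts r n + vertices_in_small_parts r n) * real (n div r)
        + real (vertices_in_large_parts r n)"
    using sum_part_sizes_mod[OF assms, of real] by (simp add: algebra_simps)
  then show ?thesis
    using two_num_edges_complete_multipartite[of n "\<lambda>i. i mod r"]
    unfolding turan_adj_def[abs_def] vertices_in_parts_sum[OF assms] by (simp add: algebra_simps)
qed

lemma two_part_equation_quadratic:
  fixes A B L :: real
  assumes "0 \<le> A" "0 \<le> B" "0 \<le> L" "B = 0 \<or> 0 < L" and eq: "A / (L + 1) + B / L = 1"
  shows "L\<^sup>2 - (A + B - 1) * L - B = 0" and "A + B - 1 \<le> L" and "L \<le> A + B"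
proof -
  have "A * L + B * (L + 1) = L * (L + 1)"
  proof (cases "B = 0")
    case True
    then show ?thesis
      using eq \<open>0 \<le> L\<close> by (simp add: field_simps)
  next
    case False
    then have "0 < L"
      using assms(4) by simp
    then show ?thesis
      using eq by (simp add: field_simps)
  qed
  then show "L\<^sup>2 - (A + B - 1) * L - B = 0"
    by (simp add: algebra_simps power2_eq_square)
  have "B / (L + 1) \<le> B / L"
    using assms(2-4) by (auto intro: divide_left_mono)
  then have "(A + B) / (L + 1) \<le> 1"
    using eq by (simp add: add_divide_distrib)
  then show "A + B - 1 \<le> L"
    using \<open>0 \<le> L\<close> by (simp add: divide_le_eq)
  have "L * (L + 1) + A = (A + B) * (L + 1)"
    using \<open>A * L + B * (L + 1) = L * (L + 1)\<close> by (simp add: algebra_simps)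
  then have "L * (L + 1) \<le> (A + B) * (L + 1)"
    using \<open>0 \<le> A\<close> by linarith
  then show "L \<le> A + B"
    using \<open>0 \<le> L\<close> by (simp add: mult_le_cancel_right)
qed

lemma three_part_equation_cubic:
  fixes A B q s mu :: real
  assumes "0 \<le> A" "0 \<le> B" "1 \<le> A + B" "0 < s" "0 \<le> q" "0 \<le> mu" "B = 0 \<or> 0 < q"
    and eq: "A / (mu + q + 1) + B / (mu + q) + s / (mu + s) = 1"
  shows "0 < mu" and "mu * (mu + q) * (mu + q + 1) = (mu + s) * ((A + B) * (mu + q) + B)"
proof -
  show "0 < mu"
  proof (rule ccontr)
    assume "\<not> 0 < mu"
    with eq \<open>0 \<le> mu\<close> \<open>0 < s\<close> have "A / (q + 1) + B / q = 0"
      by simp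
    moreover have "0 \<le> A / (q + 1)" "0 \<le> B / q"
      using assms by simp_all
    ultimately have "A / (q + 1) = 0" "B / q = 0"
      by linarith+
    then have "A = 0" "B = 0"
      using \<open>0 \<le> q\<close> assms(7) by auto
    then show False
      using assms(3) by simp
  qed
  define W where "W = mu + q"
  have "0 < W" "0 < mu + s"
    using \<open>0 < mu\<close> \<open>0 \<le> q\<close> \<open>0 < s\<close> by (simp_all add: W_def)
  have "(A * W + B * (W + 1)) / (W * (W + 1)) = A / (W + 1) + B / W"
    using \<open>0 < W\<close> by (simp add: add_frac_eq)
  also have "\<dots> = mu / (mu + s)"
    using eq \<open>0 < mu + s\<close> by (simp add: W_def field_simps)
  finally have "(A * W + B * (W + 1)) * (mu + s) = mu * (W * (W + 1))"
    using \<open>0 < W\<close> \<open>0 < mu + s\<close> by (subst (asm) frac_eq_eq) auto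
  then show "mu * (mu + q) * (mu + q + 1) = (mu + s) * ((A + B) * (mu + q) + B)"
    by (simp add: W_def algebra_simps)
qed

lemma spectral_radius_turan:
  assumes "0 < r" and "0 < n"
  defines "lam \<equiv> spectral_radius (adj_mat n (turan_adj r))" and "q \<equiv> real (n div r)"
    and "B \<equiv> real (vertices_in_small_parts r n)"
  shows "0 \<le> lam" and "(lam + q)\<^sup>2 - (real n - 1) * (lam + q) - B = 0"
    and "real n - 1 \<le> lam + q" and "lam + q \<le> real n"
proof -
  define A where "A = real (vertices_in_large_parts r n)"
  have "A + B = real n"
    using vertices_in_parts_sum[OF \<open>0 < r\<close>, of n] by (simp add: A_def B_def flip: of_nat_add)
  have lam_nonneg: "0 \<le> lam" and lam_eq: "(\<Sum>i<n. 1 / (lam + part_size n (\<lambda>i. i mod r) i)) = 1"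
    using spectral_radius_complete_multipartite_equation[OF \<open>0 < n\<close>, of "\<lambda>i. i mod r"]
    unfolding lam_def turan_adj_def[abs_def] by simp_all
  show "0 \<le> lam"
    by (fact lam_nonneg)
  have "A / (lam + q + 1) + B / (lam + q) = 1"
    using lam_eq sum_part_sizes_mod[OF \<open>0 < r\<close>, of "\<lambda>m. 1 / (lam + m)"]
    by (simp add: A_def B_def q_def ac_simps)
  moreover have "0 \<le> lam + q" "B = 0 \<or> 0 < lam + q"
    using lam_nonneg by (auto simp: q_def B_def vertices_in_small_parts_def)
  ultimately show "(lam + q)\<^sup>2 - (real n - 1) * (lam + q) - B = 0"
    and "real n - 1 \<le> lam + q" and "lam + q \<le> real n"
    using two_part_equation_quadratic[of A B "lam + q"] \<open>A + B = real n\<close>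
    by (auto simp: A_def B_def)
qed

lemma spectral_radius_join_turan:
  assumes "0 < r" and "0 < n" and "0 < s"
  defines "mu \<equiv> spectral_radius (adj_mat (n + s) (join_turan_adj r n))" and "q \<equiv> real (n div r)"
    and "B \<equiv> real (vertices_in_small_parts r n)"
  shows "0 < mu" and "mu * (mu + q) * (mu + q + 1) = (mu + real s) * (real n * (mu + q) + B)"
proof -
  define A where "A = real (vertices_in_large_parts r n)"
  have "A + B = real n"
    using vertices_in_parts_sum[OF \<open>0 < r\<close>, of n] by (simp add: A_def B_def flip: of_nat_add)
  have "0 \<le> mu" and "(\<Sum>i<n + s. 1 / (mu + part_size (n + s) (join_part r n) i)) = 1"
    using spectral_radius_complete_multipartite_equation[of "n + s" "join_part r n"] \<open>0 < n\<close>
    unfolding mu_def join_turan_adj_eq_join_part by simp_all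
  then have "A / (mu + q + 1) + B / (mu + q) + real s / (mu + real s) = 1"
    using sum_part_sizes_join[of "\<lambda>m. 1 / (mu + m)"] sum_part_sizes_mod[OF \<open>0 < r\<close>, of "\<lambda>m. 1 / (mu + m)"]
    by (simp add: A_def B_def q_def ac_simps)
  moreover have "B = 0 \<or> 0 < q"
    by (auto simp: q_def B_def vertices_in_small_parts_def)
  ultimately show "0 < mu" and "mu * (mu + q) * (mu + q + 1) = (mu + real s) * (real n * (mu + q) + B)"
    using three_part_equation_cubic[of A B "real s" q mu] \<open>0 \<le> mu\<close> \<open>A + B = real n\<close> \<open>0 < n\<close> \<open>0 < s\<close>
    by (auto simp: A_def B_def q_def)
qed

lemma join_cubic_factorization:
  fixes n s q B lam mu :: real
  assumes "(lam + q)\<^sup>2 - (n - 1) * (lam + q) - B = 0"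
    and "mu * (mu + q) * (mu + q + 1) = (mu + s) * (n * (mu + q) + B)"
  shows "s * (n * (mu + q) + B) = mu * ((mu - lam) * (mu + lam + 2 * q - n + 1))"
proof -
  have "s * (n * (mu + q) + B) = mu * ((mu + q) * (mu + q + 1) - n * (mu + q) - B)"
    using assms(2) by (simp add: algebra_simps)
  also have "(mu + q) * (mu + q + 1) - n * (mu + q) - B = (mu - lam) * (mu + lam + 2 * q - n + 1)"
    using assms(1) by (simp add: algebra_simps power2_eq_square)
  finally show ?thesis .
qed

lemma turan_root_less_join_root:
  fixes n s q B lam mu :: real
  assumes "1 \<le> n" "0 < s" "0 \<le> q" "0 \<le> B" "0 < mu"
    and "(lam + q)\<^sup>2 - (n - 1) * (lam + q) - B = 0" "n - 1 \<le> lam + q"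
    and "mu * (mu + q) * (mu + q + 1) = (mu + s) * (n * (mu + q) + B)"
  shows "lam < mu"
proof -
  have "0 < s * (n * (mu + q) + B)"
    using assms(1-5) by (simp add: add_pos_nonneg)
  then have "0 < mu * ((mu - lam) * (mu + lam + 2 * q - n + 1))"
    by (simp only: join_cubic_factorization[OF assms(6,8)])
  moreover have "0 < mu + lam + 2 * q - n + 1"
    using assms(3,5,7) by simp
  ultimately show ?thesis
    using \<open>0 < mu\<close> by (simp add: zero_less_mult_iff)
qed

lemma turan_join_remainder_pos:
  fixes n q A L W :: real
  assumes "1 \<le> n" "0 \<le> q" "0 \<le> A" "n - 1 \<le> L" "L \<le> n" "L < W"
  shows "0 < 2 * W + (L - n + 1) * ((L - n) * (L + n - 2 * q) + A + 2)"
proof -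
  define \<beta> where "\<beta> = L - n + 1"
  have "0 \<le> \<beta>" "\<beta> \<le> 1"
    using assms(4,5) by (simp_all add: \<beta>_def)
  then have "\<beta> * (1 - \<beta>) * (L + n - 2 * q) \<le> \<beta> * (1 - \<beta>) * (2 * n)"
    using assms(2,5) by (intro mult_left_mono) simp_all
  moreover have "2 * (n - 1) + 2 * \<beta> - \<beta> * (1 - \<beta>) * (2 * n) = 2 * (n - 1) * (1 - \<beta> + \<beta>\<^sup>2) + 2 * \<beta>\<^sup>2"
    by (simp add: algebra_simps power2_eq_square)
  moreover have "0 \<le> 2 * (n - 1) * (1 - \<beta> + \<beta>\<^sup>2) + 2 * \<beta>\<^sup>2"
    using \<open>1 \<le> n\<close> \<open>0 \<le> \<beta>\<close> \<open>\<beta> \<le> 1\<close> by (simp add: power2_eq_square mult_nonneg_nonneg)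
  moreover have "0 \<le> \<beta> * (A + 2)"
    using \<open>0 \<le> \<beta>\<close> \<open>0 \<le> A\<close> by simp
  moreover have "2 * (n - 1) + 2 * \<beta> < 2 * W"
    using \<open>L < W\<close> by (simp add: \<beta>_def)
  moreover have "2 * W + (L - n + 1) * ((L - n) * (L + n - 2 * q) + A + 2)
      = 2 * W + \<beta> * (A + 2) - \<beta> * (1 - \<beta>) * (L + n - 2 * q)"
    by (simp add: \<beta>_def algebra_simps)
  ultimately show ?thesis
    by linarith
qed

lemma turan_join_root_inequality:
  fixes n s q A B lam mu :: real
  assumes "1 \<le> n" "1 \<le> s" "0 \<le> q" "0 \<le> A" "0 \<le> B" "A + B = n" "0 \<le> lam"
    and turan: "(lam + q)\<^sup>2 - (n - 1) * (lam + q) - B = 0" "n - 1 \<le> lam + q" "lam + q \<le> n"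
    and join: "0 < mu" "mu * (mu + q) * (mu + q + 1) = (mu + s) * (n * (mu + q) + B)"
  shows "n * (mu + (n * (n - q) - A - 2) / n) / (mu\<^sup>2 - lam\<^sup>2) < mu / s"
proof -
  have "lam < mu"
    using turan_root_less_join_root[OF \<open>1 \<le> n\<close> _ \<open>0 \<le> q\<close> \<open>0 \<le> B\<close> join(1) turan(1,2) join(2)] \<open>1 \<le> s\<close>
    by simp
  define L where "L = lam + q"
  \<comment> \<open>Eliminating \<open>s\<close> with the factorization of the cubic leaves \<open>mu - lam\<close> times \<open>D\<close>.\<close>
  define D where "D = 2 * (mu + q) + (L - n + 1) * ((L - n) * (L + n - 2 * q) + A + 2)"
  have "(mu * (mu\<^sup>2 - lam\<^sup>2) - s * (n * mu + n * (n - q) - A - 2)) * (n * (mu + q) + B)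
      = mu * (mu\<^sup>2 - lam\<^sup>2) * (n * (mu + q) + B)
        - mu * ((mu - lam) * (mu + lam + 2 * q - n + 1)) * (n * mu + n * (n - q) - A - 2)"
    unfolding join_cubic_factorization[OF turan(1) join(2), symmetric] by (simp add: algebra_simps)
  also have "\<dots> = mu * (mu - lam) * D"
  proof -
    have A_eq: "A = n - B" and B_eq: "B = L\<^sup>2 - (n - 1) * L"
      using \<open>A + B = n\<close> turan(1) by (simp_all add: L_def)
    show ?thesis
      unfolding D_def A_eq B_eq L_def by (simp add: algebra_simps power2_eq_square power3_eq_cube)
  qed
  finally have identity: "(mu * (mu\<^sup>2 - lam\<^sup>2) - s * (n * mu + n * (n - q) - A - 2)) * (n * (mu + q) + B)
      = mu * (mu - lam) * D" .
  have "0 < D"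
    unfolding D_def using turan(2,3) \<open>lam < mu\<close> assms(1,3,4)
    by (intro turan_join_remainder_pos) (simp_all add: L_def)
  have "0 < n * (mu + q) + B"
    using \<open>1 \<le> n\<close> \<open>0 \<le> B\<close> \<open>0 \<le> q\<close> join(1) by (simp add: add_pos_nonneg)
  moreover have "0 < mu * (mu - lam) * D"
    using join(1) \<open>lam < mu\<close> \<open>0 < D\<close> by simp
  ultimately have "s * (n * mu + n * (n - q) - A - 2) < mu * (mu\<^sup>2 - lam\<^sup>2)"
    unfolding identity[symmetric] by (simp add: zero_less_mult_iff)
  moreover have "n * (mu + (n * (n - q) - A - 2) / n) = n * mu + n * (n - q) - A - 2"
    using \<open>1 \<le> n\<close> by (simp add: field_simps)
  moreover have "0 < mu\<^sup>2 - lam\<^sup>2"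
    using \<open>lam < mu\<close> \<open>0 \<le> lam\<close> by (simp add: power_strict_mono)
  ultimately show ?thesis
    using \<open>1 \<le> s\<close> by (simp add: pos_divide_less_eq pos_less_divide_eq mult.commute)
qed

theorem lemma3p4:
  fixes r s n :: nat
  assumes "r \<ge> 1" and "s \<ge> 1" and "n \<ge> 1"
  defines "lam \<equiv> spectral_radius (adj_mat n (turan_adj r))"
      and "mu \<equiv> spectral_radius (adj_mat (n + s) (join_turan_adj r n))"
      and "d\<^sub>0 \<equiv> 2 * (real (num_edges n (turan_adj r)) - 1) / real n"
  shows "real n * (mu + d\<^sub>0) / (mu\<^sup>2 - lam\<^sup>2) < mu / real s"
proof -
  have "0 < r" "0 < n" "0 < s"
    using assms(1-3) by simp_all
  define q A B where "q = real (n div r)"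
    and "A = real (vertices_in_large_parts r n)" and "B = real (vertices_in_small_parts r n)"
  have "0 \<le> q" "0 \<le> A" "0 \<le> B" "1 \<le> real n" "1 \<le> real s"
    using assms(2,3) by (simp_all add: q_def A_def B_def)
  have "A + B = real n"
    using vertices_in_parts_sum[OF \<open>0 < r\<close>, of n] by (simp add: A_def B_def flip: of_nat_add)
  note turan = spectral_radius_turan[OF \<open>0 < r\<close> \<open>0 < n\<close>, folded lam_def q_def B_def]
  note join = spectral_radius_join_turan[OF \<open>0 < r\<close> \<open>0 < n\<close> \<open>0 < s\<close>, folded mu_def q_def B_def]
  have "d\<^sub>0 = (real n * (real n - q) - A - 2) / real n"
    using two_num_edges_turan[OF \<open>0 < r\<close>, of n]
    unfolding d\<^sub>0_def q_def A_def by (simp add: algebra_simps)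
  then show ?thesis
    using turan_join_root_inequality[OF \<open>1 \<le> real n\<close> \<open>1 \<le> real s\<close> \<open>0 \<le> q\<close> \<open>0 \<le> A\<close> \<open>0 \<le> B\<close>
        \<open>A + B = real n\<close> turan join]
    by simp
qed

end
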